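(* Let $m\ge 1$ and $n\geq 2$ be integers. Then $$SO(Q(m,n))=m\Big(\frac{(m+n-2)(m-1)}{2}+(n-1)^2\big(\tfrac{n}{2}-1\big)\Big)\sqrt{2}+m(n-1)\sqrt{(m+n-2)^2+(n-1)^2}.$$
   Context: For a finite simple graph $G$ and vertex $u$, $d_u$ is the degree of $u$ in $G$, and the Sombor index is $SO(G)=\sum_{uv\in E(G)}\sqrt{d_u^2+d_v^2}$. The graph $Q(m,n)$ is obtained from the complete graph $K_m$ and $m$ pairwise disjoint copies of the complete graph $K_n$ by identifying each vertex of $K_m$ with a vertex of its own (unique) copy of $K_n$. *)

theory Defs
  imports Complex_Main
begin

type_synonym 'a graph = "'a set \<times> 'a set set"

definition simple_graph :: "'a graph \<Rightarrow> bool" where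
  "simple_graph G \<longleftrightarrow> finite (fst G) \<and> (\<forall>e\<in>snd G. card e = 2 \<and> e \<subseteq> fst G)"

definition degree :: "'a graph \<Rightarrow> 'a \<Rightarrow> nat" where
  "degree G u = card {e \<in> snd G. u \<in> e}"

text \<open>Sombor index: sum over edges uv of sqrt(d_u^2 + d_v^2); for an edge e = {u,v}
  with u \<noteq> v the inner sum is exactly d_u^2 + d_v^2.\<close>
definition sombor :: "'a graph \<Rightarrow> real" where
  "sombor G = (\<Sum>e\<in>snd G. sqrt (\<Sum>x\<in>e. (real (degree G x))^2))"

text \<open>Q(m,n): copy i of K_n has vertices (i,j), j<n; the vertex (i,0) of copy i is
  identified with vertex i of K_m.\<close>
definition Qgraph :: "nat \<Rightarrow> nat \<Rightarrow> (nat \<times> nat) graph" where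
  "Qgraph m n =
     ({0..<m} \<times> {0..<n},
      {{(i,0),(k,0)} | i k. i < m \<and> k < m \<and> i \<noteq> k}
      \<union> {{(i,j),(i,l)} | i j l. i < m \<and> j < n \<and> l < n \<and> j \<noteq> l})"

end

theory Submission
  imports Defs
begin

text \<open>Q(m,n) is the union of m+1 cliques, the central K_m and the m copies of K_n, any two of
  which share at most one vertex. The degree of a vertex is therefore the sum of (size - 1) over
  the cliques containing it: m+n-2 for the m vertices of K_m and n-1 for all others. Summing the
  Sombor weights clique by clique, K_m has C(m,2) edges of weight (m+n-2)\<surd>2, and each copy of
  K_n has n-1 edges at its attachment vertex, of weight \<surd>((m+n-2)^2+(n-1)^2), and C(n-1,2)
  further edges of weight (n-1)\<surd>2.\<close>

definition two_subsets :: "'a set \<Rightarrow> 'a set set" where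
  "two_subsets S = {e. e \<subseteq> S \<and> card e = 2}"

lemma two_subsets_eq: "two_subsets S = {{x, y} | x y. x \<in> S \<and> y \<in> S \<and> x \<noteq> y}"
  unfolding two_subsets_def card_2_iff by blast

lemma finite_two_subsets: "finite S \<Longrightarrow> finite (two_subsets S)"
  unfolding two_subsets_def by (rule finite_subset[of _ "Pow S"]) auto

lemma card_two_subsets: "finite S \<Longrightarrow> card (two_subsets S) = card S choose 2"
  unfolding two_subsets_def using n_subsets[of S 2] by (simp add: conj_commute)

lemma two_subsets_disjoint:
  assumes "finite S" "card (S \<inter> T) \<le> 1"
  shows "two_subsets S \<inter> two_subsets T = {}"
proof (rule equals0I)
  fix e assume "e \<in> two_subsets S \<inter> two_subsets T"
  then have "e \<subseteq> S \<inter> T" "card e = 2" by (auto simp: two_subsets_def)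
  with card_mono[of "S \<inter> T" e] assms show False by simp
qed

lemma two_subsets_through_point:
  "c \<in> S \<Longrightarrow> {e \<in> two_subsets S. c \<in> e} = (\<lambda>v. {c, v}) ` (S - {c})"
  unfolding two_subsets_eq by (auto simp: doubleton_eq_iff)

lemma card_two_subsets_through_point:
  assumes "finite S" "c \<in> S"
  shows "card {e \<in> two_subsets S. c \<in> e} = card S - 1"
proof -
  have "inj_on (\<lambda>v. {c, v}) (S - {c})"
    by (auto simp: inj_on_def doubleton_eq_iff)
  then show ?thesis
    using assms by (simp add: two_subsets_through_point card_image)
qed

lemma two_subsets_split_point:
  "c \<in> S \<Longrightarrow> two_subsets S = two_subsets (S - {c}) \<union> {e \<in> two_subsets S. c \<in> e}"
  unfolding two_subsets_def by blast

text \<open>Two cliques sharing at most one vertex share no edge, so every edge of G lies in exactly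
  one clique K i.\<close>
definition clique_decomposition :: "'a graph \<Rightarrow> 'i set \<Rightarrow> ('i \<Rightarrow> 'a set) \<Rightarrow> bool" where
  "clique_decomposition G I K \<longleftrightarrow> finite I \<and> (\<forall>i\<in>I. finite (K i))
     \<and> (\<forall>i\<in>I. \<forall>j\<in>I. i \<noteq> j \<longrightarrow> card (K i \<inter> K j) \<le> 1)
     \<and> snd G = (\<Union>i\<in>I. two_subsets (K i))"

lemma clique_decomposition_disjoint:
  "clique_decomposition G I K \<Longrightarrow> i \<in> I \<Longrightarrow> j \<in> I \<Longrightarrow> i \<noteq> j
    \<Longrightarrow> two_subsets (K i) \<inter> two_subsets (K j) = {}"
  unfolding clique_decomposition_def by (auto intro!: two_subsets_disjoint)

lemma degree_clique_decomposition:
  assumes G: "clique_decomposition G I K"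
  shows "degree G u = (\<Sum>i\<in>{i \<in> I. u \<in> K i}. card (K i) - 1)"
proof -
  let ?J = "{i \<in> I. u \<in> K i}"
  have fin: "finite I" "\<And>i. i \<in> I \<Longrightarrow> finite (K i)"
    using G by (auto simp: clique_decomposition_def)
  have "{e \<in> snd G. u \<in> e} = (\<Union>i\<in>?J. {e \<in> two_subsets (K i). u \<in> e})"
    using G by (auto simp: clique_decomposition_def two_subsets_def)
  then have "degree G u = card (\<Union>i\<in>?J. {e \<in> two_subsets (K i). u \<in> e})"
    by (simp add: degree_def)
  also have "\<dots> = (\<Sum>i\<in>?J. card {e \<in> two_subsets (K i). u \<in> e})"
    using fin clique_decomposition_disjoint[OF G]
    by (intro card_UN_disjoint) (auto simp: finite_two_subsets)
  also have "\<dots> = (\<Sum>i\<in>?J. card (K i) - 1)"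
    using fin by (intro sum.cong) (auto simp: card_two_subsets_through_point)
  finally show ?thesis .
qed

lemma sombor_clique_decomposition:
  assumes G: "clique_decomposition G I K"
  shows "sombor G = (\<Sum>i\<in>I. \<Sum>e\<in>two_subsets (K i). sqrt (\<Sum>x\<in>e. (real (degree G x))^2))"
proof -
  have "snd G = (\<Union>i\<in>I. two_subsets (K i))"
    using G by (simp add: clique_decomposition_def)
  then show ?thesis
    unfolding sombor_def using G clique_decomposition_disjoint[OF G]
    by (simp only:) (intro sum.UNION_disjoint; auto simp: clique_decomposition_def finite_two_subsets)
qed

lemma sum_sqrt_two_subsets_const:
  fixes w :: "'a \<Rightarrow> real"
  assumes "finite S" "\<And>x. x \<in> S \<Longrightarrow> w x = a"
  shows "(\<Sum>e\<in>two_subsets S. sqrt (\<Sum>x\<in>e. (w x)^2)) = real (card S choose 2) * sqrt (2 * a^2)"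
proof -
  have "(\<Sum>x\<in>e. (w x)^2) = 2 * a^2" if "e \<in> two_subsets S" for e
    using that assms(2) by (auto simp: two_subsets_eq)
  then show ?thesis
    using assms(1) by (simp add: card_two_subsets)
qed

lemma sum_sqrt_two_subsets_pointed:
  fixes w :: "'a \<Rightarrow> real"
  assumes "finite S" "c \<in> S" "\<And>x. x \<in> S - {c} \<Longrightarrow> w x = b"
  shows "(\<Sum>e\<in>two_subsets S. sqrt (\<Sum>x\<in>e. (w x)^2))
    = real (card S - 1) * sqrt ((w c)^2 + b^2) + real ((card S - 1) choose 2) * sqrt (2 * b^2)"
proof -
  let ?f = "\<lambda>e. sqrt (\<Sum>x\<in>e. (w x)^2)"
  have spokes: "sum ?f {e \<in> two_subsets S. c \<in> e} = real (card S - 1) * sqrt ((w c)^2 + b^2)"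
  proof -
    have "?f {c, v} = sqrt ((w c)^2 + b^2)" if "v \<in> S - {c}" for v
      using that assms(3) by auto
    then show ?thesis
      using assms(1,2) card_two_subsets_through_point[OF assms(1,2)]
      by (simp add: two_subsets_through_point sum.reindex inj_on_def doubleton_eq_iff)
  qed
  have "sum ?f (two_subsets S) = sum ?f (two_subsets (S - {c})) + sum ?f {e \<in> two_subsets S. c \<in> e}"
    using assms(1,2) by (subst two_subsets_split_point[OF assms(2)], subst sum.union_disjoint)
      (auto simp: finite_two_subsets two_subsets_def)
  also have "\<dots> = real ((card S - 1) choose 2) * sqrt (2 * b^2) + real (card S - 1) * sqrt ((w c)^2 + b^2)"
    using assms sum_sqrt_two_subsets_const[of "S - {c}" w b]
    by (simp add: spokes card_Diff_singleton)
  finally show ?thesis by simp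
qed

lemma of_nat_choose_two: "real (k choose 2) = real k * (real k - 1) / 2"
  by (simp add: binomial_gbinomial gbinomial_Suc numeral_2_eq_2)

definition Qcliques :: "nat \<Rightarrow> nat \<Rightarrow> nat option \<Rightarrow> (nat \<times> nat) set" where
  "Qcliques m n k = (case k of None \<Rightarrow> {..<m} \<times> {0} | Some i \<Rightarrow> {i} \<times> {..<n})"

lemma clique_decomposition_Qgraph:
  "clique_decomposition (Qgraph m n) (insert None (Some ` {..<m})) (Qcliques m n)"
proof -
  have "card (Qcliques m n k \<inter> Qcliques m n l) \<le> 1" if "k \<noteq> l" for k l
  proof -
    have "Qcliques m n k \<inter> Qcliques m n l \<subseteq> (case (k, l) of
        (Some i, None) \<Rightarrow> {(i, 0)} | (None, Some i) \<Rightarrow> {(i, 0)} | _ \<Rightarrow> {})"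
      using that by (auto simp: Qcliques_def split: option.split)
    then show ?thesis
      by (rule card_mono[THEN order_trans, rotated]) (auto split: option.split)
  qed
  moreover have "snd (Qgraph m n) = (\<Union>k\<in>insert None (Some ` {..<m}). two_subsets (Qcliques m n k))"
    unfolding Qgraph_def Qcliques_def two_subsets_eq by auto
  ultimately show ?thesis
    by (auto simp: clique_decomposition_def Qcliques_def)
qed

lemma degree_Qgraph_hub:
  assumes "i < m" "0 < n"
  shows "degree (Qgraph m n) (i, 0) = m + n - 2"
proof -
  have "{k \<in> insert None (Some ` {..<m}). (i, 0) \<in> Qcliques m n k} = {None, Some i}"
    using assms by (auto simp: Qcliques_def split: option.splits)
  then show ?thesis
    using assms by (simp add: degree_clique_decomposition[OF clique_decomposition_Qgraph] Qcliques_def)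
qed

lemma degree_Qgraph_leaf:
  assumes "i < m" "0 < j" "j < n"
  shows "degree (Qgraph m n) (i, j) = n - 1"
proof -
  have "{k \<in> insert None (Some ` {..<m}). (i, j) \<in> Qcliques m n k} = {Some i}"
    using assms by (auto simp: Qcliques_def split: option.splits)
  then show ?thesis
    by (simp add: degree_clique_decomposition[OF clique_decomposition_Qgraph] Qcliques_def)
qed

lemma sombor_Qgraph:
  assumes "0 < n"
  shows "sombor (Qgraph m n) = real (m choose 2) * sqrt (2 * real (m + n - 2)^2)
    + real m * (real (n - 1) * sqrt (real (m + n - 2)^2 + real (n - 1)^2)
                + real ((n - 1) choose 2) * sqrt (2 * real (n - 1)^2))"
proof -
  let ?d = "\<lambda>x. real (degree (Qgraph m n) x)"
  let ?f = "\<lambda>e. sqrt (\<Sum>x\<in>e. (?d x)^2)"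
  have central: "sum ?f (two_subsets ({..<m} \<times> {0}))
      = real (m choose 2) * sqrt (2 * real (m + n - 2)^2)"
    using assms
    by (subst sum_sqrt_two_subsets_const[where a = "real (m + n - 2)"])
      (auto simp: degree_Qgraph_hub card_cartesian_product)
  have copy: "sum ?f (two_subsets ({i} \<times> {..<n}))
      = real (n - 1) * sqrt (real (m + n - 2)^2 + real (n - 1)^2)
        + real ((n - 1) choose 2) * sqrt (2 * real (n - 1)^2)"
    if "i < m" for i
  proof -
    have "?d x = real (n - 1)" if x: "x \<in> {i} \<times> {..<n} - {(i, 0)}" for x
    proof -
      obtain j where "x = (i, j)" "0 < j" "j < n"
        using x by (cases x) auto
      then show ?thesis
        using \<open>i < m\<close> by (simp add: degree_Qgraph_leaf)
    qed
    then show ?thesis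
      using sum_sqrt_two_subsets_pointed[of "{i} \<times> {..<n}" "(i, 0)" ?d "real (n - 1)"] assms that
      by (simp add: degree_Qgraph_hub card_cartesian_product)
  qed
  show ?thesis
    by (simp add: sombor_clique_decomposition[OF clique_decomposition_Qgraph] sum.reindex
        Qcliques_def central copy)
qed

theorem mainTheorem2:
  fixes m n :: nat
  assumes "m \<ge> 1" and "n \<ge> 2"
  shows "sombor (Qgraph m n) =
     real m * ((real m + real n - 2) * (real m - 1) / 2 + (real n - 1)^2 * (real n / 2 - 1)) * sqrt 2
     + real m * (real n - 1) * sqrt ((real m + real n - 2)^2 + (real n - 1)^2)"
proof -
  define hub leaf where "hub = real (m + n - 2)" and "leaf = real (n - 1)"
  have "sqrt (2 * hub^2) = hub * sqrt 2" "sqrt (2 * leaf^2) = leaf * sqrt 2"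
    by (simp_all add: hub_def leaf_def real_sqrt_mult)
  then have "sombor (Qgraph m n) = real (m choose 2) * (hub * sqrt 2)
      + real m * (leaf * sqrt (hub^2 + leaf^2) + real ((n - 1) choose 2) * (leaf * sqrt 2))"
    using sombor_Qgraph[of n m, folded hub_def leaf_def] assms by simp
  moreover have "real m + real n - 2 = hub" "real (n - 1) = leaf" "real n = leaf + 1"
    using assms by (auto simp: hub_def leaf_def)
  ultimately show ?thesis
    by (simp add: of_nat_choose_two field_simps power2_eq_square)
qed

end
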